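(* Let $d,q\geq 2$ be integers. Then: (a) for every $\theta_w,\theta_1,\theta_0\in\mathbb{Z}$, the density $\delta(q,d;0,\theta_w,0,\theta_1,\theta_0)$ exists; (b) if $d\mid q^n$ for some $n\in\mathbb{N}$, then the density $\delta(q,d;\mathbf{s})$ exists for every $\mathbf{s}\in\mathbb{Z}^5$.
   Context: For an integer $q\geq 2$ and $n\in\mathbb{N}$: $v_q(0)=0$ and, for $n>0$, $v_q(n)=\max\{k: q^k\mid n\}$; $w_q(n)=\sum_{i=0}^n v_q(i)$; $u_q(n)=\sum_{i=0}^n w_q(i)$. For $\mathbf{s}=(\theta_u,\theta_w,\theta_2,\theta_1,\theta_0)\in\mathbb{Z}^5$, $\gamma(A,q,d;\mathbf{s})$ is the number of $n\in\mathbb{N}$, $n<A$, with $\theta_u u_q(n)+\theta_w w_q(n)+\theta_2\frac{n(n+1)}{2}+\theta_1 n+\theta_0\equiv 0\pmod d$, and $\delta(q,d;\mathbf{s})=\lim_{N\to\infty}\gamma(N,q,d;\mathbf{s})/N$ (when the limit exists). *)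

theory Defs
  imports Complex_Main
begin

definition vq :: "nat \<Rightarrow> nat \<Rightarrow> nat" where
  "vq q n = (if n = 0 then 0 else (GREATEST k. q ^ k dvd n))"

definition wq :: "nat \<Rightarrow> nat \<Rightarrow> nat" where
  "wq q n = (\<Sum>i\<le>n. vq q i)"

definition uq :: "nat \<Rightarrow> nat \<Rightarrow> nat" where
  "uq q n = (\<Sum>i\<le>n. wq q i)"

definition seqval :: "nat \<Rightarrow> int \<times> int \<times> int \<times> int \<times> int \<Rightarrow> nat \<Rightarrow> int" where
  "seqval q s n = (case s of (tu, tw, t2, t1, t0) \<Rightarrow>
     tu * int (uq q n) + tw * int (wq q n) + t2 * int (n * (n + 1) div 2) + t1 * int n + t0)"

definition gamma :: "nat \<Rightarrow> nat \<Rightarrow> nat \<Rightarrow> int \<times> int \<times> int \<times> int \<times> int \<Rightarrow> nat" where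
  "gamma A q d s = card {n. n < A \<and> (seqval q s n) mod (int d) = 0}"

definition density_exists :: "nat \<Rightarrow> nat \<Rightarrow> int \<times> int \<times> int \<times> int \<times> int \<Rightarrow> bool" where
  "density_exists q d s = convergent (\<lambda>N. real (gamma N q d s) / real N)"

end

theory Submission
  imports Defs "HOL-Computational_Algebra.Primes" "HOL-Number_Theory.Cong"
begin

(* The indicator of d dvd X is the average of e(j X / d) over j < d, with e(x) = exp(2 pi i x), so part (a)
   amounts to the convergence of the running means of e(alpha w(n) + beta n) for alpha, beta in (1/d)Z.
   Because w(q a + t) = a + w(a) for t < q, the sum of q^L N such terms factors into L digit sums
   Q(beta_i) = sum_{t<q} e(beta_i t) times a sum of the same shape with beta replaced by beta_L, where
   beta_(i+1) = alpha + q beta_i. Either the beta_i are eventually integers, and then so is alpha and the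
   remaining sum is trivial, or infinitely many of them are non-integral elements of (1/d)Z, for which
   |Q(beta_i)| <= rho q with a uniform rho < 1, and the means tend to 0.
   For (b), if d dvd q^m then modulo d the sequence at q^(m+1) a + r depends only on r and on the residue
   of a (1 + q + ... + q^m) + w(a), so its density is a finite combination of densities from (a). *)

lemma sum_lessThan_add:
  fixes f :: "nat \<Rightarrow> 'a::comm_monoid_add"
  shows "(\<Sum>k<m + n. f k) = (\<Sum>k<m. f k) + (\<Sum>k<n. f (m + k))"
  by (induction n) (simp_all add: ac_simps)

lemma sum_lessThan_mult:
  fixes f :: "nat \<Rightarrow> 'a::comm_monoid_add"
  shows "(\<Sum>n<P * M. f n) = (\<Sum>a<M. \<Sum>r<P. f (P * a + r))"
proof (induction M)
  case (Suc M)
  have "P * Suc M = P * M + P" by simp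
  with Suc show ?case by (simp only: sum_lessThan_add sum.lessThan_Suc)
qed simp

section \<open>Digits and the function w\<close>

lemma vq_eq_multiplicity:
  fixes q n :: nat
  assumes "q \<ge> 2"
  shows "vq q n = multiplicity q n"
proof (cases "n = 0")
  case False
  have "\<not> is_unit q" using assms by simp
  with False have "q ^ k dvd n \<longleftrightarrow> k \<le> multiplicity q n" for k
    by (simp add: power_dvd_iff_le_multiplicity)
  then have "(GREATEST k. q ^ k dvd n) = multiplicity q n"
    by (intro Greatest_equality) auto
  with False show ?thesis by (simp add: vq_def)
qed (simp add: vq_def)

lemma wq_0 [simp]: "wq q 0 = 0"
  by (simp add: wq_def vq_def)

lemma wq_Suc: "wq q (Suc n) = wq q n + vq q (Suc n)"
  by (simp add: wq_def)

lemma wq_eq_div_plus_wq_div: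
  assumes q: "q \<ge> 2"
  shows "wq q n = n div q + wq q (n div q)"
proof (induction n)
  case (Suc n)
  have nu: "\<not> is_unit q" using q by simp
  show ?case
  proof (cases "q dvd Suc n")
    case True
    then obtain m where m: "Suc n = q * m" by blast
    with q have "m \<noteq> 0" by (intro notI) simp
    have "Suc n div q = Suc (n div q)"
      using True by (simp add: div_Suc dvd_eq_mod_eq_0)
    with m q have "m = Suc (n div q)" by simp
    have "vq q (Suc n) = Suc (vq q m)"
      using q nu \<open>m \<noteq> 0\<close> by (simp add: m vq_eq_multiplicity multiplicity_times_same)
    then show ?thesis using Suc.IH \<open>Suc n div q = Suc (n div q)\<close> \<open>m = Suc (n div q)\<close>
      by (simp add: wq_Suc)
  next
    case False
    then have "vq q (Suc n) = 0" using q nu by (simp add: vq_eq_multiplicity multiplicity_eq_zero_iff)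
    moreover have "Suc n div q = n div q" using False by (simp add: div_Suc dvd_eq_mod_eq_0)
    ultimately show ?thesis using Suc.IH by (simp add: wq_Suc)
  qed
qed simp

lemma wq_mult_add:
  assumes "q \<ge> 2" and "t < q"
  shows "wq q (q * a + t) = a + wq q a"
  using wq_eq_div_plus_wq_div[of q "q * a + t"] assms by simp

definition repunit :: "nat \<Rightarrow> nat \<Rightarrow> nat" where
  "repunit q L = (\<Sum>i<L. q ^ i)"

lemma wq_power_mult_add:
  assumes q: "q \<ge> 2" and "r < q ^ L"
  shows "wq q (q ^ L * a + r) = a * repunit q L + wq q a + wq q r"
  using \<open>r < q ^ L\<close>
proof (induction L arbitrary: r)
  case (Suc L)
  define r' t where "r' = r div q" and "t = r mod q"
  have r: "r = q * r' + t" and t: "t < q" and r': "r' < q ^ L"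
    using q Suc.prems by (auto simp: r'_def t_def less_mult_imp_div_less mult.commute)
  have "q ^ Suc L * a + r = q * (q ^ L * a + r') + t"
    by (simp add: r algebra_simps)
  then have "wq q (q ^ Suc L * a + r) = q ^ L * a + r' + (a * repunit q L + wq q a + wq q r')"
    by (simp add: wq_mult_add[OF q t] Suc.IH[OF r'])
  moreover have "wq q r = r' + wq q r'"
    using r wq_mult_add[OF q t] by simp
  ultimately show ?case
    by (simp add: repunit_def algebra_simps)
qed (simp add: repunit_def)

section \<open>Running means\<close>

definition running_mean :: "(nat \<Rightarrow> 'a::real_normed_vector) \<Rightarrow> nat \<Rightarrow> 'a" where
  "running_mean x N = (1 / real N) *\<^sub>R (\<Sum>n<N. x n)"

lemma norm_sum_lessThan_le:
  fixes x :: "nat \<Rightarrow> 'a::real_normed_vector"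
  assumes "\<And>n. norm (x n) \<le> 1"
  shows "norm (\<Sum>i<n. x i) \<le> real n"
  using sum_norm_le[of "{..<n}" x "\<lambda>_. 1"] assms by simp

lemma norm_running_mean_le:
  fixes x :: "nat \<Rightarrow> 'a::real_normed_vector"
  assumes "\<And>n. norm (x n) \<le> 1"
  shows "norm (running_mean x N) \<le> 1"
proof (cases "N = 0")
  case False
  then show ?thesis
    using norm_sum_lessThan_le[of x N] assms by (simp add: running_mean_def field_simps)
qed (simp add: running_mean_def)

lemma norm_running_mean_diff_le:
  fixes x :: "nat \<Rightarrow> 'a::real_normed_vector"
  assumes bound: "\<And>n. norm (x n) \<le> 1" and m: "0 < m" "m \<le> N"
  shows "norm (running_mean x N - running_mean x m) \<le> 2 * real (N - m) / real N"
proof -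
  have N: "real N > 0" using m by simp
  have tail: "(\<Sum>n<N. x n) = (\<Sum>n<m. x n) + (\<Sum>n\<in>{m..<N}. x n)"
    using m by (metis atLeast0LessThan sum.atLeastLessThan_concat zero_le)
  have split: "running_mean x N - running_mean x m
      = (1 / real N) *\<^sub>R (\<Sum>n\<in>{m..<N}. x n) + (real m / real N - 1) *\<^sub>R running_mean x m"
    using N m by (simp add: running_mean_def tail algebra_simps)
  have "norm ((1 / real N) *\<^sub>R (\<Sum>n\<in>{m..<N}. x n)) \<le> real (N - m) / real N"
    using sum_norm_le[of "{m..<N}" x "\<lambda>_. 1"] bound N by (simp add: divide_right_mono)
  moreover have "norm ((real m / real N - 1) *\<^sub>R running_mean x m) \<le> real (N - m) / real N"
  proof -
    have "\<bar>real m / real N - 1\<bar> = real (N - m) / real N"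
      using N m by (simp add: field_simps)
    then show ?thesis
      using norm_running_mean_le[of x m] bound by (simp add: mult_left_le divide_right_mono)
  qed
  ultimately show ?thesis
    unfolding split
    using norm_triangle_ineq[of "(1 / real N) *\<^sub>R (\<Sum>n\<in>{m..<N}. x n)"
        "(real m / real N - 1) *\<^sub>R running_mean x m"]
    by linarith
qed

lemma running_mean_tendsto_if_approx_along_multiples:
  fixes x :: "nat \<Rightarrow> 'a::real_normed_vector"
  assumes bound: "\<And>n. norm (x n) \<le> 1"
    and approx: "\<And>e. e > 0 \<Longrightarrow> \<exists>P\<ge>1. \<forall>\<^sub>F M in sequentially. norm (running_mean x (P * M) - c) \<le> e"
  shows "running_mean x \<longlonglongrightarrow> c"
proof (rule LIMSEQ_I)
  fix r :: real
  assume r: "r > 0"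
  obtain P M0 where P: "P \<ge> 1" and M0: "\<And>M. M \<ge> M0 \<Longrightarrow> norm (running_mean x (P * M) - c) \<le> r / 2"
    using approx[of "r / 2"] r by (auto simp: eventually_sequentially)
  obtain K :: nat where K: "real K > 4 * real P / r"
    using reals_Archimedean2 by blast
  show "\<exists>N0. \<forall>N\<ge>N0. norm (running_mean x N - c) < r"
  proof (intro exI allI impI)
    fix N
    assume N: "N \<ge> P * Suc M0 + K"
    define M where "M = N div P"
    have PM: "P * M \<le> N" "N - P * M < P"
      using P by (simp_all add: M_def minus_mod_eq_mult_div [symmetric])
    have "M \<ge> Suc M0"
      using N P unfolding M_def by (metis div_le_mono le_add1 le_trans nonzero_mult_div_cancel_left not_one_le_zero)
    then have "norm (running_mean x (P * M) - c) \<le> r / 2" and "0 < P * M"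
      using M0 P by auto
    moreover have "2 * real (N - P * M) / real N < r / 2"
    proof -
      have "4 * real P < r * real K" using K r by (simp add: field_simps)
      also have "\<dots> \<le> r * real N" using N r by simp
      finally have "4 * real P < r * real N" .
      moreover have "real (N - P * M) < real P" using PM by linarith
      ultimately have "2 * real (N - P * M) < r / 2 * real N" by linarith
      moreover have "real N > 0" using \<open>0 < P * M\<close> PM(1) by linarith
      ultimately show ?thesis by (simp add: pos_divide_less_eq)
    qed
    moreover have "norm (running_mean x N - running_mean x (P * M)) \<le> 2 * real (N - P * M) / real N"
      using bound \<open>0 < P * M\<close> PM(1) by (rule norm_running_mean_diff_le)
    moreover have "norm (running_mean x N - c)
        \<le> norm (running_mean x N - running_mean x (P * M)) + norm (running_mean x (P * M) - c)"
      using norm_triangle_ineq[of "running_mean x N - running_mean x (P * M)" "running_mean x (P * M) - c"]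
      by simp
    ultimately show "norm (running_mean x N - c) < r" by linarith
  qed
qed

lemma running_mean_tendsto_if_tendsto_along_multiples:
  fixes x :: "nat \<Rightarrow> 'a::real_normed_vector"
  assumes "\<And>n. norm (x n) \<le> 1" and "P \<ge> 1"
    and "(\<lambda>M. running_mean x (P * M)) \<longlonglongrightarrow> c"
  shows "running_mean x \<longlonglongrightarrow> c"
proof (rule running_mean_tendsto_if_approx_along_multiples[OF assms(1)])
  fix e :: real
  assume "e > 0"
  then have "\<forall>\<^sub>F M in sequentially. norm (running_mean x (P * M) - c) \<le> e"
    using assms(3) by (auto simp: tendsto_iff dist_norm elim!: eventually_mono)
  then show "\<exists>P\<ge>1. \<forall>\<^sub>F M in sequentially. norm (running_mean x (P * M) - c) \<le> e"
    using assms(2) by blast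
qed

lemma running_mean_mult:
  fixes x :: "nat \<Rightarrow> 'a::real_normed_vector"
  shows "running_mean x (P * M) = (1 / real P) *\<^sub>R (\<Sum>r<P. running_mean (\<lambda>a. x (P * a + r)) M)"
  by (simp add: running_mean_def sum_lessThan_mult sum.swap[of _ "{..<P}"] scaleR_sum_right)

lemma convergent_running_mean_if_residue_classes:
  fixes x :: "nat \<Rightarrow> 'a::real_normed_vector"
  assumes "\<And>n. norm (x n) \<le> 1" and "P \<ge> 1"
    and "\<And>r. r < P \<Longrightarrow> convergent (running_mean (\<lambda>a. x (P * a + r)))"
  shows "convergent (running_mean x)"
proof -
  obtain l where "\<And>r. r < P \<Longrightarrow> running_mean (\<lambda>a. x (P * a + r)) \<longlonglongrightarrow> l r"
    using assms(3) unfolding convergent_def by metis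
  then have "(\<lambda>M. running_mean x (P * M)) \<longlonglongrightarrow> (1 / real P) *\<^sub>R (\<Sum>r<P. l r)"
    unfolding running_mean_mult by (intro tendsto_scaleR tendsto_const tendsto_sum) auto
  then show ?thesis
    using running_mean_tendsto_if_tendsto_along_multiples[of x P] assms(1,2) by (auto simp: convergent_def)
qed

lemma running_mean_sum_mult:
  fixes x :: "'j \<Rightarrow> nat \<Rightarrow> 'a::real_normed_algebra"
  shows "running_mean (\<lambda>n. \<Sum>j\<in>J. c j * x j n) N = (\<Sum>j\<in>J. c j * running_mean (x j) N)"
  by (simp add: running_mean_def sum.swap[of _ J] scaleR_sum_right sum_distrib_left)

lemma running_mean_of_real:
  "running_mean (\<lambda>n. of_real (x n) :: 'a::real_normed_algebra_1) N = of_real (running_mean x N)"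
  by (simp add: running_mean_def scaleR_conv_of_real of_real_sum [symmetric] of_real_mult [symmetric]
      del: of_real_sum of_real_mult)

section \<open>Exponential sums\<close>

definition e2pi :: "real \<Rightarrow> complex" where
  "e2pi x = cis (2 * pi * x)"

lemma e2pi_add: "e2pi (x + y) = e2pi x * e2pi y"
  by (simp add: e2pi_def cis_mult distrib_left)

lemma norm_e2pi [simp]: "norm (e2pi x) = 1"
  by (simp add: e2pi_def)

lemma e2pi_of_nat_mult: "e2pi (real j * x) = e2pi x ^ j"
  by (simp add: e2pi_def DeMoivre mult.left_commute)

lemma cos_2pi_eq_1_iff: "cos (2 * pi * x) = 1 \<longleftrightarrow> x \<in> \<int>"
proof
  assume "cos (2 * pi * x) = 1"
  then obtain n :: int where "2 * pi * x = of_int n * 2 * pi"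
    using cos_one_2pi_int by blast
  then show "x \<in> \<int>" by simp
qed (auto elim: Ints_cases)

lemma e2pi_eq_1_iff: "e2pi x = 1 \<longleftrightarrow> x \<in> \<int>"
proof
  assume "e2pi x = 1"
  then have "cos (2 * pi * x) = 1"
    unfolding e2pi_def by (metis cis.sel(1) one_complex.sel(1))
  then show "x \<in> \<int>" by (simp add: cos_2pi_eq_1_iff)
qed (auto simp: e2pi_def elim: Ints_cases)

lemma e2pi_add_Ints: "k \<in> \<int> \<Longrightarrow> e2pi (x + k) = e2pi x"
  by (simp add: e2pi_add e2pi_eq_1_iff)

lemma sum_e2pi_roots_of_unity:
  assumes d: "d > 0"
  shows "(\<Sum>j<d. e2pi (real j * of_int X / real d)) = (if int d dvd X then of_nat d else 0)"
proof -
  define z where "z = e2pi (of_int X / real d)"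
  have "(\<Sum>j<d. e2pi (real j * of_int X / real d)) = (\<Sum>j<d. z ^ j)"
    by (simp add: z_def e2pi_of_nat_mult [symmetric])
  moreover have "z = 1 \<longleftrightarrow> int d dvd X"
    using d of_int_div_of_int_in_Ints_iff[of X "int d", where 'a = real]
    by (simp add: z_def e2pi_eq_1_iff)
  moreover have "z ^ d = 1"
    using d by (simp add: z_def e2pi_of_nat_mult [symmetric] e2pi_eq_1_iff)
  ultimately show ?thesis
    by (cases "int d dvd X") (simp_all add: geometric_sum)
qed

lemma norm_one_plus_e2pi_less:
  assumes "x \<notin> \<int>"
  shows "norm (1 + e2pi x) < 2"
proof -
  have "cos (2 * pi * x) < 1"
    using assms cos_le_one[of "2 * pi * x"] cos_2pi_eq_1_iff[of x] by linarith
  have "norm (1 + e2pi x) ^ 2 = (1 + cos (2 * pi * x)) ^ 2 + sin (2 * pi * x) ^ 2"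
    by (simp add: e2pi_def cmod_power2)
  also have "\<dots> = 2 + 2 * cos (2 * pi * x)"
    using sin_cos_squared_add[of "2 * pi * x"] by (simp add: power2_eq_square algebra_simps)
  also have "\<dots> < 2 ^ 2"
    using \<open>cos (2 * pi * x) < 1\<close> by simp
  finally show ?thesis by (rule power_less_imp_less_base) simp
qed

definition wq_phase :: "nat \<Rightarrow> real \<Rightarrow> real \<Rightarrow> nat \<Rightarrow> complex" where
  "wq_phase q \<alpha> \<beta> n = e2pi (\<alpha> * real (wq q n) + \<beta> * real n)"

definition digit_exp_sum :: "nat \<Rightarrow> real \<Rightarrow> complex" where
  "digit_exp_sum q \<beta> = (\<Sum>t<q. e2pi (\<beta> * real t))"

definition phase_iter :: "nat \<Rightarrow> real \<Rightarrow> real \<Rightarrow> nat \<Rightarrow> real" where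
  "phase_iter q \<alpha> \<beta> i = ((\<lambda>b. \<alpha> + real q * b) ^^ i) \<beta>"

lemma norm_wq_phase [simp]: "norm (wq_phase q \<alpha> \<beta> n) = 1"
  by (simp add: wq_phase_def)

lemma phase_iter_0 [simp]: "phase_iter q \<alpha> \<beta> 0 = \<beta>"
  by (simp add: phase_iter_def)

lemma phase_iter_Suc: "phase_iter q \<alpha> \<beta> (Suc i) = \<alpha> + real q * phase_iter q \<alpha> \<beta> i"
  by (simp add: phase_iter_def)

lemma phase_iter_Suc_shift: "phase_iter q \<alpha> \<beta> (Suc i) = phase_iter q \<alpha> (\<alpha> + real q * \<beta>) i"
  by (simp add: phase_iter_def funpow_Suc_right del: funpow.simps)

lemma wq_phase_mult_add:
  assumes "q \<ge> 2" and "t < q"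
  shows "wq_phase q \<alpha> \<beta> (q * a + t) = e2pi (\<beta> * real t) * wq_phase q \<alpha> (\<alpha> + real q * \<beta>) a"
proof -
  have "\<alpha> * real (wq q (q * a + t)) + \<beta> * real (q * a + t)
      = \<beta> * real t + (\<alpha> * real (wq q a) + (\<alpha> + real q * \<beta>) * real a)"
    using wq_mult_add[OF assms] by (simp add: algebra_simps)
  then show ?thesis by (simp add: wq_phase_def e2pi_add)
qed

lemma sum_wq_phase_mult:
  assumes "q \<ge> 2"
  shows "(\<Sum>n<q * N. wq_phase q \<alpha> \<beta> n) = digit_exp_sum q \<beta> * (\<Sum>n<N. wq_phase q \<alpha> (\<alpha> + real q * \<beta>) n)"
proof -
  have "(\<Sum>n<q * N. wq_phase q \<alpha> \<beta> n) = (\<Sum>a<N. \<Sum>t<q. wq_phase q \<alpha> \<beta> (q * a + t))"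
    by (rule sum_lessThan_mult)
  also have "\<dots> = (\<Sum>a<N. \<Sum>t<q. e2pi (\<beta> * real t) * wq_phase q \<alpha> (\<alpha> + real q * \<beta>) a)"
    using wq_phase_mult_add[OF assms] by simp
  finally show ?thesis
    by (simp add: digit_exp_sum_def sum_distrib_left sum_distrib_right mult.commute)
qed

lemma sum_wq_phase_power_mult:
  assumes "q \<ge> 2"
  shows "(\<Sum>n<q ^ L * N. wq_phase q \<alpha> \<beta> n)
       = (\<Prod>i<L. digit_exp_sum q (phase_iter q \<alpha> \<beta> i)) * (\<Sum>n<N. wq_phase q \<alpha> (phase_iter q \<alpha> \<beta> L) n)"
proof (induction L arbitrary: \<beta>)
  case (Suc L)
  have "(\<Sum>n<q ^ Suc L * N. wq_phase q \<alpha> \<beta> n) = (\<Sum>n<q * (q ^ L * N). wq_phase q \<alpha> \<beta> n)"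
    by (simp add: mult.assoc)
  also have "\<dots> = digit_exp_sum q \<beta> * (\<Sum>n<q ^ L * N. wq_phase q \<alpha> (\<alpha> + real q * \<beta>) n)"
    by (rule sum_wq_phase_mult[OF assms])
  finally show ?case
    by (simp add: Suc.IH phase_iter_Suc_shift prod.lessThan_Suc_shift mult.assoc del: prod.lessThan_Suc)
qed simp

lemma norm_digit_exp_sum_le: "norm (digit_exp_sum q x) \<le> real q"
  using norm_sum_lessThan_le[of "\<lambda>t. e2pi (x * real t)" q] by (simp add: digit_exp_sum_def)

lemma norm_digit_exp_sum_less:
  assumes q: "q \<ge> 2" and x: "x \<notin> \<int>"
  shows "norm (digit_exp_sum q x) < real q"
proof -
  have "digit_exp_sum q x = (\<Sum>t<2 + (q - 2). e2pi (x * real t))"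
    using q by (simp only: digit_exp_sum_def le_add_diff_inverse)
  also have "\<dots> = (1 + e2pi x) + (\<Sum>t<q - 2. e2pi (x * real (2 + t)))"
    by (simp only: sum_lessThan_add) (simp add: numeral_2_eq_2 e2pi_def del: of_nat_add)
  finally have "norm (digit_exp_sum q x) \<le> norm (1 + e2pi x) + norm (\<Sum>t<q - 2. e2pi (x * real (2 + t)))"
    by (simp add: norm_triangle_ineq)
  also have "\<dots> \<le> norm (1 + e2pi x) + real (q - 2)"
    using norm_sum_lessThan_le[of "\<lambda>t. e2pi (x * real (2 + t))" "q - 2"] by simp
  also have "\<dots> < real q"
    using norm_one_plus_e2pi_less[OF x] q by linarith
  finally show ?thesis .
qed

lemma digit_exp_sum_add_Ints:
  assumes "k \<in> \<int>"
  shows "digit_exp_sum q (x + k) = digit_exp_sum q x"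
proof -
  have "e2pi ((x + k) * real t) = e2pi (x * real t)" for t
    using e2pi_add_Ints[of "k * real t" "x * real t"] assms by (simp add: algebra_simps)
  then show ?thesis by (simp add: digit_exp_sum_def)
qed

lemma digit_exp_sum_uniform_bound:
  assumes q: "q \<ge> 2" and d: "d > 0"
  obtains \<rho> :: real where "\<rho> < 1"
    and "\<And>k. of_int k / real d \<notin> \<int> \<Longrightarrow> norm (digit_exp_sum q (of_int k / real d)) \<le> \<rho> * real q"
proof -
  define f where "f k = norm (digit_exp_sum q (of_int k / real d)) / real q" for k
  \<comment> \<open>the 0 keeps the set nonempty when d = 1\<close>
  define \<rho> where "\<rho> = Max (insert 0 (f ` {1..<int d}))"
  have q0: "real q > 0" using q by simp
  have "\<rho> < 1"
  proof -
    have "f k < 1" if "k \<in> {1..<int d}" for k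
    proof -
      have "of_int k / real d \<notin> \<int>"
        using that of_int_div_of_int_in_Ints_iff[of k "int d", where 'a = real] zdvd_not_zless[of k "int d"]
        by auto
      then show ?thesis using norm_digit_exp_sum_less[OF q] q0 by (simp add: f_def)
    qed
    then show ?thesis by (simp add: \<rho>_def)
  qed
  moreover have "norm (digit_exp_sum q (of_int k / real d)) \<le> \<rho> * real q"
    if k: "of_int k / real d \<notin> \<int>" for k
  proof -
    have "real_of_int k = of_int (k mod int d) + real d * of_int (k div int d)"
      by (metis of_int_add of_int_mult of_int_of_nat_eq mod_mult_div_eq)
    then have split: "of_int k / real d = of_int (k mod int d) / real d + of_int (k div int d)"
      using d by (simp add: field_simps)
    have "k mod int d \<noteq> 0"
      using k of_int_div_of_int_in_Ints_iff[of k "int d", where 'a = real] by auto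
    moreover have "0 \<le> k mod int d" "k mod int d < int d"
      using d by simp_all
    ultimately have "k mod int d \<in> {1..<int d}"
      by simp
    then have "f (k mod int d) \<le> \<rho>"
      unfolding \<rho>_def by (intro Max_ge) auto
    moreover have "digit_exp_sum q (of_int k / real d) = digit_exp_sum q (of_int (k mod int d) / real d)"
      by (subst split) (simp add: digit_exp_sum_add_Ints)
    ultimately show ?thesis
      using q0 by (simp add: f_def field_simps)
  qed
  ultimately show ?thesis using that by blast
qed

lemma running_mean_wq_phase_tendsto_if_eventually_Ints:
  assumes q: "q \<ge> 2" and K: "\<forall>i\<ge>K. phase_iter q \<alpha> \<beta> i \<in> \<int>"
  shows "running_mean (wq_phase q \<alpha> \<beta>)
           \<longlonglongrightarrow> (\<Prod>i<K. digit_exp_sum q (phase_iter q \<alpha> \<beta> i)) / of_nat (q ^ K)"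
proof (rule running_mean_tendsto_if_tendsto_along_multiples)
  have "\<alpha> = phase_iter q \<alpha> \<beta> (Suc K) - real q * phase_iter q \<alpha> \<beta> K"
    by (simp add: phase_iter_Suc)
  then have "\<alpha> \<in> \<int>" using K by (metis Ints_diff Ints_mult Ints_of_nat le_Suc_eq order_refl)
  then have "wq_phase q \<alpha> (phase_iter q \<alpha> \<beta> K) n = 1" for n
    using K by (simp add: wq_phase_def e2pi_eq_1_iff)
  then have "(\<Sum>n<q ^ K * M. wq_phase q \<alpha> \<beta> n) = (\<Prod>i<K. digit_exp_sum q (phase_iter q \<alpha> \<beta> i)) * of_nat M"
    for M by (simp add: sum_wq_phase_power_mult[OF q])
  then have "running_mean (wq_phase q \<alpha> \<beta>) (q ^ K * M)
      = (\<Prod>i<K. digit_exp_sum q (phase_iter q \<alpha> \<beta> i)) / of_nat (q ^ K)" if "M > 0" for M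
    using that q by (simp add: running_mean_def scaleR_conv_of_real field_simps)
  then show "(\<lambda>M. running_mean (wq_phase q \<alpha> \<beta>) (q ^ K * M))
      \<longlonglongrightarrow> (\<Prod>i<K. digit_exp_sum q (phase_iter q \<alpha> \<beta> i)) / of_nat (q ^ K)"
    by (intro tendsto_eventually eventually_sequentiallyI[of 1]) simp
qed (use q in simp_all)

lemma prod_le_power_if_frequently_le:
  fixes f :: "nat \<Rightarrow> real"
  assumes f: "\<And>i. 0 \<le> f i" "\<And>i. f i \<le> 1" and "0 \<le> \<rho>" and freq: "\<forall>K. \<exists>i\<ge>K. f i \<le> \<rho>"
  shows "\<exists>L. (\<Prod>i<L. f i) \<le> \<rho> ^ c"
proof (induction c)
  case 0
  show ?case using f by (intro exI[of _ 0]) simp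
next
  case (Suc c)
  then obtain L where L: "(\<Prod>i<L. f i) \<le> \<rho> ^ c" by blast
  obtain i where i: "i \<ge> L" "f i \<le> \<rho>" using freq by blast
  have "(\<Prod>i<i. f i) = (\<Prod>i<L. f i) * (\<Prod>i\<in>{L..<i}. f i)"
    using i(1) by (metis atLeast0LessThan prod.atLeastLessThan_concat zero_le)
  also have "\<dots> \<le> (\<Prod>i<L. f i)"
    using f by (intro mult_left_le prod_le_1 prod_nonneg) auto
  finally have "(\<Prod>i<Suc i. f i) \<le> (\<Prod>i<L. f i) * \<rho>"
    using f i(2) by (simp add: mult_mono prod_nonneg)
  also have "\<dots> \<le> \<rho> ^ Suc c"
    using L \<open>0 \<le> \<rho>\<close> by (simp add: mult_left_mono mult.commute)
  finally show ?case by blast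
qed

lemma running_mean_wq_phase_tendsto_0:
  assumes q: "q \<ge> 2" and "\<rho> < 1"
    and bound: "\<And>i. phase_iter q \<alpha> \<beta> i \<notin> \<int> \<Longrightarrow> norm (digit_exp_sum q (phase_iter q \<alpha> \<beta> i)) \<le> \<rho> * real q"
    and freq: "\<forall>K. \<exists>i\<ge>K. phase_iter q \<alpha> \<beta> i \<notin> \<int>"
  shows "running_mean (wq_phase q \<alpha> \<beta>) \<longlonglongrightarrow> 0"
proof (rule running_mean_tendsto_if_approx_along_multiples)
  fix e :: real
  assume "e > 0"
  define f where "f i = norm (digit_exp_sum q (phase_iter q \<alpha> \<beta> i)) / real q" for i
  have q0: "real q > 0" using q by simp
  have "\<rho> \<ge> 0"
    using freq bound[of _] norm_ge_zero q0 by (metis zero_le_mult_iff not_less order_trans)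
  obtain c where c: "\<rho> ^ c < e"
    using real_arch_pow_inv[OF \<open>e > 0\<close> \<open>\<rho> < 1\<close>] by blast
  have "\<exists>L. (\<Prod>i<L. f i) \<le> \<rho> ^ c"
  proof (rule prod_le_power_if_frequently_le)
    show "f i \<le> 1" for i
      using norm_digit_exp_sum_le q0 by (simp add: f_def)
    show "\<forall>K. \<exists>i\<ge>K. f i \<le> \<rho>"
      using freq bound q0 by (fastforce simp: f_def divide_le_eq)
  qed (use \<open>\<rho> \<ge> 0\<close> in \<open>simp_all add: f_def\<close>)
  then obtain L where L: "(\<Prod>i<L. f i) \<le> \<rho> ^ c" by blast
  have "norm (running_mean (wq_phase q \<alpha> \<beta>) (q ^ L * M) - 0) \<le> e" if "M > 0" for M
  proof -
    have "norm (\<Sum>n<q ^ L * M. wq_phase q \<alpha> \<beta> n)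
        \<le> (\<Prod>i<L. norm (digit_exp_sum q (phase_iter q \<alpha> \<beta> i))) * real M"
      using q norm_sum_lessThan_le[of "wq_phase q \<alpha> (phase_iter q \<alpha> \<beta> L)" M]
      by (simp add: sum_wq_phase_power_mult norm_mult prod_norm mult_left_mono prod_nonneg)
    then have "norm (running_mean (wq_phase q \<alpha> \<beta>) (q ^ L * M)) \<le> (\<Prod>i<L. f i)"
      using that q0 by (simp add: running_mean_def f_def prod_dividef field_simps)
    then show ?thesis using L c by simp
  qed
  then show "\<exists>P\<ge>1. \<forall>\<^sub>F M in sequentially. norm (running_mean (wq_phase q \<alpha> \<beta>) (P * M) - 0) \<le> e"
    using q by (intro exI[of _ "q ^ L"] conjI eventually_sequentiallyI[of 1]) auto
qed simp

lemma convergent_running_mean_wq_phase: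
  assumes q: "q \<ge> 2" and d: "d > 0"
  shows "convergent (running_mean (wq_phase q (of_int A / real d) (of_int B / real d)))"
proof -
  define \<alpha> \<beta> where "\<alpha> = of_int A / real d" and "\<beta> = of_int B / real d"
  have frac: "\<exists>k. phase_iter q \<alpha> \<beta> i = of_int k / real d" for i
  proof (induction i)
    case 0
    show ?case by (auto simp: \<beta>_def)
  next
    case (Suc i)
    then obtain k where "phase_iter q \<alpha> \<beta> i = of_int k / real d" by blast
    then have "phase_iter q \<alpha> \<beta> (Suc i) = of_int (A + int q * k) / real d"
      by (simp add: phase_iter_Suc \<alpha>_def add_divide_distrib)
    then show ?case by blast
  qed
  show ?thesis
  proof (cases "\<exists>K. \<forall>i\<ge>K. phase_iter q \<alpha> \<beta> i \<in> \<int>")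
    case True
    then show ?thesis
      using running_mean_wq_phase_tendsto_if_eventually_Ints[OF q]
      by (auto simp: \<alpha>_def \<beta>_def convergent_def)
  next
    case False
    obtain \<rho> where "\<rho> < 1" and \<rho>:
      "\<And>k. of_int k / real d \<notin> \<int> \<Longrightarrow> norm (digit_exp_sum q (of_int k / real d)) \<le> \<rho> * real q"
      using digit_exp_sum_uniform_bound[OF q d] by blast
    have "running_mean (wq_phase q \<alpha> \<beta>) \<longlonglongrightarrow> 0"
    proof (rule running_mean_wq_phase_tendsto_0[OF q \<open>\<rho> < 1\<close>])
      show "norm (digit_exp_sum q (phase_iter q \<alpha> \<beta> i)) \<le> \<rho> * real q"
        if "phase_iter q \<alpha> \<beta> i \<notin> \<int>" for i
        using that frac[of i] \<rho> by auto
    qed (use False in blast)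
    then show ?thesis by (auto simp: \<alpha>_def \<beta>_def convergent_def)
  qed
qed

section \<open>Densities of linear combinations of w(n) and n\<close>

lemma of_bool_dvd_eq_mean_e2pi:
  assumes "d > 0"
  shows "of_bool (int d dvd X) = (1 / of_nat d) * (\<Sum>j<d. e2pi (real j * of_int X / real d))"
  using assms by (simp add: sum_e2pi_roots_of_unity)

lemma gamma_eq_sum_of_bool: "real (gamma N q d s) = (\<Sum>n<N. of_bool (seqval q s n mod int d = 0))"
proof -
  have "{..<N} \<inter> {n. seqval q s n mod int d = 0} = {n. n < N \<and> seqval q s n mod int d = 0}"
    by auto
  then show ?thesis by (simp add: gamma_def)
qed

lemma density_exists_iff_convergent_running_mean:
  "density_exists q d s \<longleftrightarrow> convergent (running_mean (\<lambda>n. of_bool (seqval q s n mod int d = 0) :: real))"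
proof -
  have "running_mean (\<lambda>n. of_bool (seqval q s n mod int d = 0)) = (\<lambda>N. real (gamma N q d s) / real N)"
    unfolding running_mean_def gamma_eq_sum_of_bool by (simp add: fun_eq_iff)
  then show ?thesis by (simp add: density_exists_def)
qed

lemma density_exists_wq_linear:
  assumes q: "q \<ge> 2" and d: "d > 0"
  shows "density_exists q d (0, tw, 0, t1, t0)"
proof -
  define E where "E j = e2pi (real j * of_int t0 / real d)" for j
  define G where "G j = wq_phase q (of_int (int j * tw) / real d) (of_int (int j * t1) / real d)" for j
  define I :: "nat \<Rightarrow> real" where "I n = of_bool (seqval q (0, tw, 0, t1, t0) n mod int d = 0)" for n
  define X where "X n = tw * int (wq q n) + t1 * int n + t0" for n
  have "of_real (I n) = (\<Sum>j<d. E j / of_nat d * G j n)" for n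
  proof -
    have "e2pi (real j * of_int (X n) / real d) = E j * G j n" for j
    proof -
      have "real j * of_int (X n) / real d
          = real j * of_int t0 / real d
            + (of_int (int j * tw) / real d * real (wq q n) + of_int (int j * t1) / real d * real n)"
        using d by (simp add: X_def field_simps)
      then show ?thesis by (simp only: E_def G_def wq_phase_def e2pi_add)
    qed
    moreover have "(of_real (I n) :: complex) = of_bool (int d dvd X n)"
      by (simp add: I_def X_def seqval_def dvd_eq_mod_eq_0)
    ultimately show ?thesis
      using of_bool_dvd_eq_mean_e2pi[OF d, of "X n"] by (simp add: sum_distrib_left)
  qed
  then have "running_mean (\<lambda>n. of_real (I n)) N = (\<Sum>j<d. E j / of_nat d * running_mean (G j) N)" for N
    by (simp only: running_mean_sum_mult)
  moreover have "convergent (\<lambda>N. \<Sum>j<d. E j / of_nat d * running_mean (G j) N)"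
    unfolding G_def
    by (intro convergent_sum convergent_mult convergent_const convergent_running_mean_wq_phase[OF q d])
  ultimately have "convergent (\<lambda>N. of_real (running_mean I N) :: complex)"
    by (simp add: running_mean_of_real [symmetric])
  then obtain L where "(\<lambda>N. of_real (running_mean I N) :: complex) \<longlonglongrightarrow> L"
    by (auto simp: convergent_def)
  then have "convergent (running_mean I)"
    using tendsto_Re by (fastforce simp: convergent_def)
  then show ?thesis
    by (simp add: density_exists_iff_convergent_running_mean I_def [abs_def])
qed

section \<open>Densities when d divides a power of q\<close>

lemma sum_wq_power_mult:
  assumes "q \<ge> 2"
  shows "(\<Sum>i<q ^ L * a. wq q i)
       = q ^ L * (\<Sum>b<a. b * repunit q L + wq q b) + a * (\<Sum>t<q ^ L. wq q t)"
proof -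
  have "(\<Sum>i<q ^ L * a. wq q i) = (\<Sum>b<a. \<Sum>t<q ^ L. (b * repunit q L + wq q b) + wq q t)"
    using wq_power_mult_add[OF assms] by (simp add: sum_lessThan_mult add.assoc)
  also have "\<dots> = (\<Sum>b<a. q ^ L * (b * repunit q L + wq q b) + (\<Sum>t<q ^ L. wq q t))"
    by (intro sum.cong refl) (simp add: sum.distrib algebra_simps)
  also have "\<dots> = q ^ L * (\<Sum>b<a. b * repunit q L + wq q b) + a * (\<Sum>t<q ^ L. wq q t)"
    by (subst sum_distrib_left) (simp add: sum.distrib)
  finally show ?thesis .
qed

lemma power_dvd_sum_wq:
  assumes "q \<ge> 2"
  shows "q ^ L dvd (\<Sum>t<q ^ Suc L. wq q t)"
proof (induction L)
  case (Suc L)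
  have "(\<Sum>t<q ^ Suc (Suc L). wq q t)
      = q ^ Suc L * (\<Sum>b<q. b * repunit q (Suc L) + wq q b) + q * (\<Sum>t<q ^ Suc L. wq q t)"
    using sum_wq_power_mult[OF assms, of "Suc L" q] by (simp add: mult.commute)
  with Suc.IH show ?case by (simp add: mult_dvd_mono)
qed simp

lemma uq_power_mult_add_cong:
  assumes q: "q \<ge> 2" and r: "r < q ^ Suc m"
  shows "[uq q (q ^ Suc m * a + r) = (r + 1) * (a * repunit q (Suc m) + wq q a) + uq q r] (mod q ^ m)"
proof -
  have uq: "uq q n = (\<Sum>i<Suc n. wq q i)" for n
    by (simp add: uq_def lessThan_Suc_atMost)
  have "(\<Sum>t<Suc r. wq q (q ^ Suc m * a + t)) = (\<Sum>t<Suc r. (a * repunit q (Suc m) + wq q a) + wq q t)"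
  proof (rule sum.cong)
    fix t
    assume "t \<in> {..<Suc r}"
    with r have "t < q ^ Suc m" by simp
    then show "wq q (q ^ Suc m * a + t) = (a * repunit q (Suc m) + wq q a) + wq q t"
      by (rule wq_power_mult_add[OF q])
  qed simp
  then have "uq q (q ^ Suc m * a + r)
      = (\<Sum>i<q ^ Suc m * a. wq q i) + (\<Sum>t<Suc r. (a * repunit q (Suc m) + wq q a) + wq q t)"
    by (simp only: uq add_Suc_right [symmetric] sum_lessThan_add)
  also have "\<dots> = (\<Sum>i<q ^ Suc m * a. wq q i) + ((r + 1) * (a * repunit q (Suc m) + wq q a) + uq q r)"
    by (simp add: uq sum.distrib)
  finally show ?thesis
    using sum_wq_power_mult[OF q, of "Suc m" a] power_dvd_sum_wq[OF q, of m]
    by (simp add: cong_add_rcancel_0_nat cong_0_iff mult.assoc)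
qed

lemma triangular_power_mult_add_cong:
  fixes q a r :: nat
  shows "[(q ^ Suc m * a + r) * (q ^ Suc m * a + r + 1) div 2 = r * (r + 1) div 2] (mod q ^ m)"
proof -
  define Z where "Z = q * a * (q ^ Suc m * a + 2 * r + 1)"
  have "even Z"
    by (cases "even q"; cases "even a") (simp_all add: Z_def)
  have "(q ^ Suc m * a + r) * (q ^ Suc m * a + r + 1) = r * (r + 1) + q ^ m * Z"
    by (simp add: Z_def algebra_simps)
  with \<open>even Z\<close> have "(q ^ Suc m * a + r) * (q ^ Suc m * a + r + 1) div 2 = r * (r + 1) div 2 + q ^ m * (Z div 2)"
    by (auto elim!: evenE)
  then show ?thesis
    by (simp add: cong_add_lcancel_0_nat cong_0_iff)
qed

definition block_seqval :: "nat \<Rightarrow> int \<times> int \<times> int \<times> int \<times> int \<Rightarrow> nat \<Rightarrow> nat \<Rightarrow> int" where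
  "block_seqval q s r z = (case s of (tu, tw, t2, t1, t0) \<Rightarrow>
     tu * int ((r + 1) * z + uq q r) + tw * int (z + wq q r) + t2 * int (r * (r + 1) div 2) + t1 * int r + t0)"

lemma seqval_power_mult_add_cong:
  assumes q: "q \<ge> 2" and dm: "d dvd q ^ m" and r: "r < q ^ Suc m"
  shows "[seqval q s (q ^ Suc m * a + r)
          = block_seqval q s r ((a * repunit q (Suc m) + wq q a) mod d)] (mod int d)"
proof -
  define n Z where "n = q ^ Suc m * a + r" and "Z = a * repunit q (Suc m) + wq q a"
  have Z: "[Z = Z mod d] (mod d)"
    by simp
  have "[uq q n = (r + 1) * Z + uq q r] (mod d)"
    using cong_dvd_modulus_nat[OF uq_power_mult_add_cong[OF q r] dm] by (simp add: n_def Z_def)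
  then have U: "[uq q n = (r + 1) * (Z mod d) + uq q r] (mod d)"
    using Z by (metis cong_add_rcancel_nat cong_scalar_left cong_trans)
  have "wq q n = Z + wq q r"
    unfolding n_def Z_def by (rule wq_power_mult_add[OF q r])
  then have W: "[wq q n = Z mod d + wq q r] (mod d)"
    by (simp add: cong_add_rcancel_nat)
  have T: "[n * (n + 1) div 2 = r * (r + 1) div 2] (mod d)"
    using cong_dvd_modulus_nat[OF triangular_power_mult_add_cong dm] by (simp add: n_def)
  have N: "[n = r] (mod d)"
    using dm by (simp add: n_def cong_add_rcancel_0_nat cong_0_iff dvd_mult2)
  obtain tu tw t2 t1 t0 where s: "s = (tu, tw, t2, t1, t0)"
    by (cases s) auto
  show ?thesis
    unfolding seqval_def block_seqval_def s n_def [symmetric] Z_def [symmetric] prod.case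
    using U W T N by (intro cong_add cong_mult cong_refl) (simp_all flip: cong_int_iff)
qed

lemma density_exists_if_dvd_power:
  assumes q: "q \<ge> 2" and d: "d > 0" and dm: "d dvd q ^ m"
  shows "density_exists q d s"
proof -
  define P C where "P = q ^ Suc m" and "C = repunit q (Suc m)"
  define x :: "nat \<Rightarrow> real" where "x n = of_bool (seqval q s n mod int d = 0)" for n
  define ind :: "nat \<Rightarrow> nat \<Rightarrow> real" where "ind c a = of_bool ((a * C + wq q a) mod d = c)" for c a
  define fr :: "nat \<Rightarrow> nat \<Rightarrow> real" where "fr r c = of_bool (block_seqval q s r c mod int d = 0)" for r c
  have ind_convergent: "convergent (running_mean (ind c))" if "c < d" for c
  proof -
    have "seqval q (0, 1, 0, int C, - int c) a mod int d = 0 \<longleftrightarrow> (a * C + wq q a) mod d = c" for a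
    proof -
      have "seqval q (0, 1, 0, int C, - int c) a = int (a * C + wq q a) - int c"
        by (simp add: seqval_def algebra_simps)
      then have "seqval q (0, 1, 0, int C, - int c) a mod int d = 0
          \<longleftrightarrow> int (a * C + wq q a) mod int d = int c mod int d"
        by (simp only: mod_eq_dvd_iff dvd_eq_mod_eq_0 [symmetric])
      also have "\<dots> \<longleftrightarrow> int ((a * C + wq q a) mod d) = int c"
        using that by (simp only: of_nat_mod) simp
      finally show ?thesis by simp
    qed
    then show ?thesis
      using density_exists_wq_linear[OF q d, of 1 "int C" "- int c"]
      by (simp add: density_exists_iff_convergent_running_mean ind_def [abs_def])
  qed
  have x_block: "x (P * a + r) = (\<Sum>c<d. fr r c * ind c a)" if "r < P" for a r
  proof -
    have "seqval q s (P * a + r) mod int d = block_seqval q s r ((a * C + wq q a) mod d) mod int d"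
      using seqval_power_mult_add_cong[OF q dm, where r = r and a = a and s = s] that
      by (simp only: P_def C_def cong_def)
    then have "x (P * a + r) = fr r ((a * C + wq q a) mod d)"
      by (simp only: x_def fr_def)
    moreover have "{..<d} \<inter> {c. (a * C + wq q a) mod d = c} = {(a * C + wq q a) mod d}"
      using d by auto
    ultimately show ?thesis
      by (simp add: ind_def)
  qed
  have residue_convergent: "convergent (running_mean (\<lambda>a. x (P * a + r)))" if "r < P" for r
  proof -
    have "running_mean (\<lambda>a. x (P * a + r)) = running_mean (\<lambda>a. \<Sum>c<d. fr r c * ind c a)"
      by (simp only: x_block[OF that])
    also have "\<dots> = (\<lambda>M. \<Sum>c<d. fr r c * running_mean (ind c) M)"
      by (rule ext) (rule running_mean_sum_mult)
    finally have "running_mean (\<lambda>a. x (P * a + r)) = (\<lambda>M. \<Sum>c<d. fr r c * running_mean (ind c) M)" .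
    moreover have "convergent (\<lambda>M. \<Sum>c<d. fr r c * running_mean (ind c) M)"
    proof (rule convergent_sum)
      fix c :: nat
      assume "c \<in> {..<d}"
      then have "convergent (running_mean (ind c))"
        by (intro ind_convergent) simp
      then show "convergent (\<lambda>M. fr r c * running_mean (ind c) M)"
        by (rule convergent_mult[OF convergent_const])
    qed
    ultimately show ?thesis by (simp only:)
  qed
  have "convergent (running_mean x)"
  proof (rule convergent_running_mean_if_residue_classes)
    show "norm (x n) \<le> 1" for n
      by (simp add: x_def)
    show "P \<ge> 1"
      using q by (simp add: P_def)
  qed (rule residue_convergent)
  then show ?thesis
    by (simp add: density_exists_iff_convergent_running_mean x_def [abs_def])
qed

theorem theorem3p1:
  fixes q d :: nat
  assumes "q \<ge> 2" and "d \<ge> 2"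
  shows "(\<forall>tw t1 t0 :: int. density_exists q d (0, tw, 0, t1, t0))
       \<and> ((\<exists>n::nat. d dvd q ^ n) \<longrightarrow> (\<forall>s. density_exists q d s))"
proof -
  have "d > 0" using assms(2) by simp
  then show ?thesis
    using density_exists_wq_linear[OF assms(1)] density_exists_if_dvd_power[OF assms(1)] by blast
qed

end
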